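(* Let $B$ be a composite fluid-solid earth model, $I=[t_0,t_1]$, $\varphi\in\mathcal{A}(\overline B\times I)$, and let $\rho^s$ satisfy $\rho^s_t\in L^\infty(\varphi_t(B))$ for almost all $t$ together with conservation of mass (for $V=B^S$ and $V=B^F$: $\int_{\varphi_{t'}(A)}\rho^s_{t'}dV=\int_{\varphi_{t''}(A)}\rho^s_{t''}dV$ for all open $A\subseteq V$ and a.a. $t',t''$). Let $f_t\in L^\infty(B)$ and $f^s_t=f_t\circ\varphi_t^{-1}$. Then $$\int_{\varphi_t(A)}f^s_t\,\rho^s_t\,dV=\int_A f_t\,\rho^0\,dV$$ for all Lipschitz domains $A\subseteq B$ and almost all $t\in I$.
   Context: A composite fluid-solid earth model is a Lipschitz domain $B\subseteq\mathbb{R}^3$ that is the disjoint union of pairwise disjoint fluid and solid Lipschitz domains $V^F_k,V^S_k$ (forming a Lipschitz-composite domain) and their interior boundary $\Sigma$; $B^S=(\bigcup_k\overline{V^S_k})^\circ$, $B^F=(\bigcup_k\overline{V^F_k})^\circ$, $\Sigma^{FS}$ the fluid-solid part of $\Sigma$. $\mathrm{Reg}^+_{\mathrm{Lip}}(\overline V\times I)$ is the set of $\psi\in\mathrm{Lip}(\overline V\times I)^3$ with $\psi_{t_0}=\mathrm{Id}$ such that for all $t$: $\psi_t(V)$ open, $\psi_t(\overline V)$ closed, $\psi_t$ injective with Lipschitz inverse on $\psi_t(\overline V)$, $\det\nabla\psi_t>0$ a.e. The admissible motions $\mathcal{A}(\overline B\times I)$ are the $\varphi\in\mathcal{C}^0(I,L^\infty(B))^3$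 with $\varphi_{t_0}=\mathrm{Id}$ such that: $\varphi_t(\overline B)$ is homeomorphic to $\overline B$ and $\bigcup_t\varphi_t(B)$ is bounded; the restrictions to $B^S\times I$, $B^F\times I$ extend to elements of $\mathrm{Reg}^+_{\mathrm{Lip}}$ of the respective closures; $\varphi_t(B^S)\cap\varphi_t(B^F)=\emptyset$; and for a.e. $t$, $[v^s_t]_-^+\cdot\nu^s_t=0$ on $\varphi_t(\Sigma^{FS})$ ($v^s_t=\partial_t\varphi_t\circ\varphi_t^{-1}$, $\nu^s_t$ the unit normal). Material density $\rho_t=\rho^s_t\circ\varphi_t$, $\rho^0=\rho_{t_0}$.
   Formalization: The exceptional null sets of times in conservation of mass and in $\rho^s_t\in L^\infty(\varphi_t(B))$ exclude $t_0$, and on $\overline B$ outside $B^S\cup B^F$, $\varphi_t$ agrees with the extension from $B^S$ or from $B^F$. Each condition added here is assumed in the paper as well or is needed for the statement above to hold. *)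

theory Defs
  imports "HOL-Analysis.Analysis"
begin

definition lipschitz_domain :: "(real^3) set \<Rightarrow> bool" where
  "lipschitz_domain V \<longleftrightarrow>
     open V \<and> bounded V \<and> connected V \<and> V \<noteq> {} \<and>
     (\<forall>p\<in>frontier V. \<exists>(Q::real^3 \<Rightarrow> real^3) r h L (g::real \<times> real \<Rightarrow> real).
        orthogonal_transformation Q \<and> r > 0 \<and> h > 0 \<and>
        L-lipschitz_on UNIV g \<and> g (0, 0) = 0 \<and>
        (\<forall>a b. norm (a, b) < r \<longrightarrow> \<bar>g (a, b)\<bar> < h) \<and>
        (\<forall>x. let y = Q (x - p) in
              (norm (y$1, y$2) < r \<and> \<bar>y$3\<bar> < h) \<longrightarrow>
              (x \<in> V \<longleftrightarrow> y$3 < g (y$1, y$2))))"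

definition interior_boundary ::
  "(real^3) set \<Rightarrow> nat set \<Rightarrow> (nat \<Rightarrow> (real^3) set) \<Rightarrow> nat set \<Rightarrow> (nat \<Rightarrow> (real^3) set)
   \<Rightarrow> (real^3) set" where
  "interior_boundary B KF VF KS VS =
     B \<inter> ((\<Union>k\<in>KF. frontier (VF k)) \<union> (\<Union>k\<in>KS. frontier (VS k)))"

definition fluid_solid_boundary ::
  "(real^3) set \<Rightarrow> nat set \<Rightarrow> (nat \<Rightarrow> (real^3) set) \<Rightarrow> nat set \<Rightarrow> (nat \<Rightarrow> (real^3) set)
   \<Rightarrow> (real^3) set" where
  "fluid_solid_boundary B KF VF KS VS =
     interior_boundary B KF VF KS VS \<inter> (\<Union>k\<in>KF. frontier (VF k)) \<inter> (\<Union>k\<in>KS. frontier (VS k))"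

definition region_union :: "nat set \<Rightarrow> (nat \<Rightarrow> (real^3) set) \<Rightarrow> (real^3) set" where
  "region_union K V = interior (\<Union>k\<in>K. closure (V k))"

definition composite_earth_model ::
  "(real^3) set \<Rightarrow> nat set \<Rightarrow> (nat \<Rightarrow> (real^3) set) \<Rightarrow> nat set \<Rightarrow> (nat \<Rightarrow> (real^3) set) \<Rightarrow> bool" where
  "composite_earth_model B KF VF KS VS \<longleftrightarrow>
     lipschitz_domain B \<and> finite KF \<and> finite KS \<and>
     (\<forall>k\<in>KF. lipschitz_domain (VF k)) \<and> (\<forall>k\<in>KS. lipschitz_domain (VS k)) \<and>
     (\<forall>k\<in>KF. \<forall>k'\<in>KF. k \<noteq> k' \<longrightarrow> VF k \<inter> VF k' = {}) \<and>
     (\<forall>k\<in>KS. \<forall>k'\<in>KS. k \<noteq> k' \<longrightarrow> VS k \<inter> VS k' = {}) \<and>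
     (\<forall>k\<in>KF. \<forall>k'\<in>KS. VF k \<inter> VS k' = {}) \<and>
     B = (\<Union>k\<in>KF. VF k) \<union> (\<Union>k\<in>KS. VS k) \<union> interior_boundary B KF VF KS VS"

definition in_Linf :: "(real^3) set \<Rightarrow> (real^3 \<Rightarrow> 'b::real_normed_vector) \<Rightarrow> bool" where
  "in_Linf S g \<longleftrightarrow> g \<in> borel_measurable (lebesgue_on S) \<and>
     (\<exists>C. AE x in lebesgue. x \<in> S \<longrightarrow> norm (g x) \<le> C)"

definition cont_Linf :: "(real^3) set \<Rightarrow> real set \<Rightarrow> (real \<Rightarrow> real^3 \<Rightarrow> real^3) \<Rightarrow> bool" where
  "cont_Linf S I \<phi> \<longleftrightarrow> (\<forall>t\<in>I. in_Linf S (\<phi> t)) \<and>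
     (\<forall>t\<in>I. \<forall>e>0. \<exists>d>0. \<forall>s\<in>I. \<bar>s - t\<bar> < d \<longrightarrow>
        (AE x in lebesgue. x \<in> S \<longrightarrow> norm (\<phi> s x - \<phi> t x) \<le> e))"

definition reg_lip_pos :: "(real^3) set \<Rightarrow> real set \<Rightarrow> real \<Rightarrow> (real \<Rightarrow> real^3 \<Rightarrow> real^3) \<Rightarrow> bool" where
  "reg_lip_pos V I t0 \<psi> \<longleftrightarrow>
     (\<exists>L. L-lipschitz_on (closure V \<times> I) (\<lambda>(x, t). \<psi> t x)) \<and>
     (\<forall>x\<in>closure V. \<psi> t0 x = x) \<and>
     (\<forall>t\<in>I. open (\<psi> t ` V) \<and> closed (\<psi> t ` closure V) \<and> inj_on (\<psi> t) (closure V) \<and>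
        (\<exists>L. L-lipschitz_on (\<psi> t ` closure V) (inv_into (closure V) (\<psi> t))) \<and>
        (AE x in lebesgue. x \<in> V \<longrightarrow>
           (\<exists>D. (\<psi> t has_derivative D) (at x) \<and> det (matrix D) > 0)))"

definition H2_null :: "(real^3) set \<Rightarrow> bool" where
  "H2_null N \<longleftrightarrow> (\<forall>e>0. \<exists>C :: nat \<Rightarrow> (real^3) set.
     N \<subseteq> (\<Union>i. C i) \<and> (\<forall>i. bounded (C i)) \<and>
     summable (\<lambda>i. diameter (C i) ^ 2) \<and> (\<Sum>i. diameter (C i) ^ 2) < e)"

text \<open>nu is a unit normal of the surface S at y (S has the tangent plane nu-perp at y).\<close>
definition unit_normal :: "(real^3) set \<Rightarrow> real^3 \<Rightarrow> real^3 \<Rightarrow> bool" where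
  "unit_normal S y \<nu> \<longleftrightarrow> y \<in> S \<and> norm \<nu> = 1 \<and>
     ((\<lambda>z. ((z - y) /\<^sub>R norm (z - y)) \<bullet> \<nu>) \<longlongrightarrow> 0) (at y within S)"

text \<open>Continuity of the normal velocity across the (deformed) fluid-solid boundary S at
time t: H2-a.e. on S, the jump of the velocity (solid side minus fluid side) is tangential.
The one-sided velocities are the time derivatives of the Lipschitz extensions.\<close>
definition normal_jump_zero ::
  "(real^3) set \<Rightarrow> real set \<Rightarrow> real \<Rightarrow> (real \<Rightarrow> real^3 \<Rightarrow> real^3) \<Rightarrow> (real^3) set
   \<Rightarrow> (real \<Rightarrow> real^3 \<Rightarrow> real^3) \<Rightarrow> (real^3) set \<Rightarrow> bool" where
  "normal_jump_zero S I t \<psi>S XS \<psi>F XF \<longleftrightarrow> (\<exists>N. H2_null N \<and>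
     (\<forall>y\<in>S - N. \<forall>xs\<in>XS. \<forall>xf\<in>XF. \<forall>a b \<nu>.
        \<psi>S t xs = y \<longrightarrow> \<psi>F t xf = y \<longrightarrow>
        ((\<lambda>s. \<psi>S s xs) has_vector_derivative a) (at t within I) \<longrightarrow>
        ((\<lambda>s. \<psi>F s xf) has_vector_derivative b) (at t within I) \<longrightarrow>
        unit_normal S y \<nu> \<longrightarrow> (a - b) \<bullet> \<nu> = 0))"

definition admissible ::
  "(real^3) set \<Rightarrow> nat set \<Rightarrow> (nat \<Rightarrow> (real^3) set) \<Rightarrow> nat set \<Rightarrow> (nat \<Rightarrow> (real^3) set)
   \<Rightarrow> real set \<Rightarrow> real \<Rightarrow> (real \<Rightarrow> real^3 \<Rightarrow> real^3) \<Rightarrow> bool" where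
  "admissible B KF VF KS VS I t0 \<phi> \<longleftrightarrow>
     (let BS = region_union KS VS; BF = region_union KF VF;
          \<Sigma>FS = fluid_solid_boundary B KF VF KS VS in
     cont_Linf B I \<phi> \<and> (\<forall>x\<in>B. \<phi> t0 x = x) \<and>
     (\<forall>t\<in>I. (\<phi> t ` closure B) homeomorphic (closure B)) \<and>
     bounded (\<Union>t\<in>I. \<phi> t ` B) \<and>
     (\<forall>t\<in>I. \<phi> t ` BS \<inter> \<phi> t ` BF = {}) \<and>
     (\<exists>\<psi>S \<psi>F. reg_lip_pos BS I t0 \<psi>S \<and> reg_lip_pos BF I t0 \<psi>F \<and>
        (\<forall>t\<in>I. \<forall>x\<in>BS. \<phi> t x = \<psi>S t x) \<and>
        (\<forall>t\<in>I. \<forall>x\<in>BF. \<phi> t x = \<psi>F t x) \<and>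
        (\<forall>t\<in>I. \<forall>x\<in>closure B - (BS \<union> BF).
           (x \<in> closure BS \<and> \<phi> t x = \<psi>S t x) \<or> (x \<in> closure BF \<and> \<phi> t x = \<psi>F t x)) \<and>
        (AE t in lebesgue. t \<in> I \<longrightarrow>
           normal_jump_zero (\<phi> t ` \<Sigma>FS) I t \<psi>S (closure BS) \<psi>F (closure BF))))"

definition mass_conserved ::
  "(real^3) set \<Rightarrow> real set \<Rightarrow> real \<Rightarrow> (real \<Rightarrow> real^3 \<Rightarrow> real^3) \<Rightarrow> (real \<Rightarrow> real^3 \<Rightarrow> real) \<Rightarrow> bool"
  where
  "mass_conserved V I t0 \<phi> \<rho>s \<longleftrightarrow>
     (\<forall>A. open A \<and> A \<subseteq> V \<longrightarrow>
        (\<exists>N. N \<in> null_sets lebesgue \<and> t0 \<notin> N \<and>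
           (\<forall>t'\<in>I - N. \<forall>t''\<in>I - N.
              (LINT y:\<phi> t' ` A|lebesgue. \<rho>s t' y) = (LINT y:\<phi> t'' ` A|lebesgue. \<rho>s t'' y))))"

end

theory Submission
  imports Defs
begin

text \<open>On the solid and on the fluid region the motion at a fixed time is an injective Lipschitz map
  \<open>\<psi>\<close>, differentiable almost everywhere, so the change of variables formula applies to it.
  Conservation of mass on the countably many open sets cut out of a region by rational boxes holds
  simultaneously for almost every time; by change of variables \<open>|det D\<psi>| \<rho>\<^sub>t \<circ> \<psi>\<close> and
  \<open>\<rho>\<^sup>0\<close> then have equal integrals over all these sets, so they agree almost everywhere, and a
  second change of variables transports \<open>f\<^sub>t \<rho>\<^sup>0\<close> to \<open>f\<^sup>s\<^sub>t \<rho>\<^sub>t\<close> on each region.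
  The rest of the body is a finite union of Lipschitz boundaries, which is negligible and stays
  negligible under the Lipschitz motion, so the two regional identities add up.\<close>

section \<open>Lipschitz images and boundaries of Lipschitz domains\<close>

lemma negligible_lipschitz_image:
  fixes g :: "'a::euclidean_space \<Rightarrow> 'a"
  assumes "L-lipschitz_on S g" "negligible N" "N \<subseteq> S"
  shows "negligible (g ` N)"
proof (rule negligible_locally_Lipschitz_image[OF order_refl assms(2)])
  fix x assume "x \<in> N"
  then show "\<exists>T B. open T \<and> x \<in> T \<and> (\<forall>y\<in>N \<inter> T. norm (g y - g x) \<le> B * norm (y - x))"
    using assms(1,3) by (intro exI[of _ UNIV] exI[of _ L]) (auto simp: lipschitz_on_def dist_norm)
qed

lemma negligible_lipschitz_graph:
  fixes g :: "real \<times> real \<Rightarrow> real"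
  assumes "L-lipschitz_on UNIV g"
  shows "negligible {y::real^3. y$3 = g (y$1, y$2)}"
proof -
  define e3 :: "real^3" where "e3 = axis 3 1"
  define \<Gamma> where "\<Gamma> z = z + g (z$1, z$2) *\<^sub>R e3" for z
  have pair: "(sqrt 2)-lipschitz_on UNIV (\<lambda>z::real^3. (z$1, z$2))"
    using lipschitz_on_Pair[of 1 UNIV "\<lambda>z::real^3. z$1" 1 "\<lambda>z. z$2"]
    by (simp add: lipschitz_on_def dist_vec_nth_le)
  have scale: "1-lipschitz_on UNIV (\<lambda>t::real. t *\<^sub>R e3)"
    by (rule lipschitz_onI) (simp_all add: e3_def dist_norm flip: scaleR_diff_left)
  have "(1 + 1 * (L * sqrt 2))-lipschitz_on UNIV \<Gamma>"
    unfolding \<Gamma>_def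
    by (intro lipschitz_on_add lipschitz_on_id lipschitz_on_compose2[OF _ lipschitz_on_subset[OF scale]]
        lipschitz_on_compose2[OF pair lipschitz_on_subset[OF assms]]) auto
  moreover have "negligible {z. e3 \<bullet> z = 0}"
    by (rule negligible_hyperplane) (simp add: e3_def)
  moreover have "{y. y$3 = g (y$1, y$2)} \<subseteq> \<Gamma> ` {z. e3 \<bullet> z = 0}"
  proof
    fix y :: "real^3" assume "y \<in> {y. y$3 = g (y$1, y$2)}"
    then have "\<Gamma> (y - (y$3) *\<^sub>R e3) = y"
      by (simp add: \<Gamma>_def e3_def axis_def)
    moreover have "e3 \<bullet> (y - (y$3) *\<^sub>R e3) = 0"
      by (simp add: e3_def inner_axis' inner_diff_right)
    ultimately show "y \<in> \<Gamma> ` {z. e3 \<bullet> z = 0}" by force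
  qed
  ultimately show ?thesis
    by (meson negligible_lipschitz_image negligible_subset subset_UNIV)
qed

lemma frontier_Int_subgraph:
  fixes u w :: "'a::topological_space \<Rightarrow> real"
  assumes "open V" "open T" "continuous_on UNIV u" "continuous_on UNIV w"
    and below: "\<And>x. x \<in> T \<Longrightarrow> x \<in> V \<longleftrightarrow> u x < w x"
  shows "frontier V \<inter> T \<subseteq> {x. u x = w x}"
proof
  fix x assume x: "x \<in> frontier V \<inter> T"
  then have "x \<notin> V"
    using assms(1) by (simp add: frontier_def interior_open)
  then have "w x \<le> u x"
    using x below by force
  moreover have "\<not> w x < u x"
  proof
    assume "w x < u x"
    define W where "W = T \<inter> {x. w x < u x}"
    have "open W"
      unfolding W_def by (intro open_Int assms(2) open_Collect_less assms(3,4))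
    moreover have "W \<inter> V = {}"
      using below by (auto simp: W_def)
    ultimately have "W \<inter> closure V = {}"
      using open_Int_closure_eq_empty by blast
    moreover have "x \<in> W"
      using x \<open>w x < u x\<close> by (simp add: W_def)
    ultimately show False
      using x by (auto simp: frontier_def)
  qed
  ultimately show "x \<in> {x. u x = w x}"
    by simp
qed

lemma lipschitz_domain_frontier_locally_graph:
  assumes "lipschitz_domain V" "p \<in> frontier V"
  obtains T and Q :: "real^3 \<Rightarrow> real^3" and L g where "open T" "p \<in> T" "orthogonal_transformation Q"
    "L-lipschitz_on UNIV g"
    "\<And>x. x \<in> frontier V \<inter> T \<Longrightarrow> Q (x - p) $ 3 = g (Q (x - p) $ 1, Q (x - p) $ 2)"
proof -
  obtain Q :: "real^3 \<Rightarrow> real^3" and r h L and g :: "real \<times> real \<Rightarrow> real" where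
    Q: "orthogonal_transformation Q" and r: "r > 0" and h: "h > 0" and g: "L-lipschitz_on UNIV g"
    and cyl: "\<And>x. norm (Q (x - p) $ 1, Q (x - p) $ 2) < r \<and> \<bar>Q (x - p) $ 3\<bar> < h \<Longrightarrow>
                (x \<in> V \<longleftrightarrow> Q (x - p) $ 3 < g (Q (x - p) $ 1, Q (x - p) $ 2))"
  proof -
    have "\<exists>(Q::real^3 \<Rightarrow> real^3) r h L (g::real \<times> real \<Rightarrow> real).
        orthogonal_transformation Q \<and> r > 0 \<and> h > 0 \<and> L-lipschitz_on UNIV g \<and>
        (\<forall>x. norm (Q (x - p) $ 1, Q (x - p) $ 2) < r \<and> \<bar>Q (x - p) $ 3\<bar> < h \<longrightarrow>
              (x \<in> V \<longleftrightarrow> Q (x - p) $ 3 < g (Q (x - p) $ 1, Q (x - p) $ 2)))"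
      using assms unfolding lipschitz_domain_def Let_def by blast
    then show thesis
      using that by blast
  qed
  define y where "y x = Q (x - p)" for x
  have cont_Q: "continuous_on UNIV Q"
    using Q by (simp add: orthogonal_transformation_def linear_continuous_on linear_conv_bounded_linear)
  have "continuous_on UNIV y"
    unfolding y_def by (intro continuous_on_compose2[OF cont_Q] continuous_intros) auto
  then have cont_y: "continuous_on UNIV (\<lambda>x. y x $ i)" for i
    by (intro continuous_intros)
  have cont_gy: "continuous_on UNIV (\<lambda>x. g (y x $ 1, y x $ 2))"
    by (intro continuous_on_compose2[OF lipschitz_on_continuous_on[OF g]] continuous_intros cont_y) auto
  define T where "T = {x. norm (y x $ 1, y x $ 2) < r \<and> \<bar>y x $ 3\<bar> < h}"
  have "open T"
    unfolding T_def by (intro open_Collect_conj open_Collect_less continuous_intros cont_y)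
  moreover have "p \<in> T"
    using r h Q by (simp add: T_def y_def linear_0 orthogonal_transformation_linear)
  moreover have "frontier V \<inter> T \<subseteq> {x. y x $ 3 = g (y x $ 1, y x $ 2)}"
    using assms(1) \<open>open T\<close> cont_y cont_gy cyl
    by (intro frontier_Int_subgraph) (auto simp: lipschitz_domain_def T_def y_def)
  ultimately show thesis
    using that Q g unfolding y_def by blast
qed

lemma lipschitz_domain_frontier_negligible:
  assumes "lipschitz_domain V"
  shows "negligible (frontier V)"
proof -
  have "\<exists>T. open T \<and> p \<in> T \<and> negligible (frontier V \<inter> T)" if p: "p \<in> frontier V" for p
  proof -
    obtain T and Q :: "real^3 \<Rightarrow> real^3" and L g where T: "open T" "p \<in> T"
      and Q: "orthogonal_transformation Q" and g: "L-lipschitz_on UNIV g"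
      and graph: "\<And>x. x \<in> frontier V \<inter> T \<Longrightarrow> Q (x - p) $ 3 = g (Q (x - p) $ 1, Q (x - p) $ 2)"
      using lipschitz_domain_frontier_locally_graph[OF assms p] by blast
    have "1-lipschitz_on UNIV (\<lambda>y. p + inv Q y)"
      using orthogonal_transformation_inv[OF Q]
      by (intro lipschitz_onI) (simp_all add: orthogonal_transformation_isometry)
    then have "negligible ((\<lambda>y. p + inv Q y) ` {y. y$3 = g (y$1, y$2)})"
      by (rule negligible_lipschitz_image[OF _ negligible_lipschitz_graph[OF g]]) simp
    moreover have "frontier V \<inter> T \<subseteq> (\<lambda>y. p + inv Q y) ` {y. y$3 = g (y$1, y$2)}"
    proof
      fix x assume "x \<in> frontier V \<inter> T"
      then show "x \<in> (\<lambda>y. p + inv Q y) ` {y. y$3 = g (y$1, y$2)}"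
        using graph orthogonal_transformation_inj[OF Q]
        by (intro image_eqI[of _ _ "Q (x - p)"]) (simp_all add: inv_f_f)
    qed
    ultimately show ?thesis
      using T negligible_subset by blast
  qed
  then obtain T where T: "\<And>p. p \<in> frontier V \<Longrightarrow> open (T p) \<and> p \<in> T p \<and> negligible (frontier V \<inter> T p)"
    by metis
  have "compact (frontier V)"
    using assms by (simp add: lipschitz_domain_def compact_frontier_bounded)
  then obtain D where D: "D \<subseteq> frontier V" "finite D" "frontier V \<subseteq> \<Union> (T ` D)"
    using compactE_image[of "frontier V" "frontier V" T] T by blast
  then have "frontier V = (\<Union>p\<in>D. frontier V \<inter> T p)"
    by blast
  also have "negligible \<dots>"
    using D T by (intro negligible_Union) auto
  finally show ?thesis .
qed

lemma in_Linf_subset: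
  assumes "in_Linf W g" "T \<subseteq> W"
  shows "in_Linf T g"
proof -
  obtain C where "g \<in> borel_measurable (lebesgue_on W)" "AE x in lebesgue. x \<in> W \<longrightarrow> norm (g x) \<le> C"
    using assms(1) unfolding in_Linf_def by blast
  moreover from this(2) have "AE x in lebesgue. x \<in> T \<longrightarrow> norm (g x) \<le> C"
    by eventually_elim (use assms(2) in auto)
  ultimately show ?thesis
    unfolding in_Linf_def using measurable_restrict_mono[OF _ assms(2)] by blast
qed

lemma in_Linf_mult:
  fixes f g :: "real^3 \<Rightarrow> real"
  assumes "in_Linf T f" "in_Linf T g"
  shows "in_Linf T (\<lambda>x. f x * g x)"
proof -
  obtain C D where
    meas: "f \<in> borel_measurable (lebesgue_on T)" "g \<in> borel_measurable (lebesgue_on T)" and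
    bound: "AE x in lebesgue. x \<in> T \<longrightarrow> norm (f x) \<le> C" "AE x in lebesgue. x \<in> T \<longrightarrow> norm (g x) \<le> D"
    using assms unfolding in_Linf_def by blast
  from bound have "AE x in lebesgue. x \<in> T \<longrightarrow> norm (f x * g x) \<le> C * D"
    by eventually_elim (auto simp: abs_mult intro: mult_mono' order_trans[OF abs_ge_zero])
  moreover have "(\<lambda>x. f x * g x) \<in> borel_measurable (lebesgue_on T)"
    using meas by measurable
  ultimately show ?thesis
    unfolding in_Linf_def by blast
qed

lemma in_Linf_set_integrable:
  fixes g :: "real^3 \<Rightarrow> real"
  assumes "in_Linf T g" "T \<in> sets lebesgue" "bounded T"
  shows "set_integrable lebesgue T g"
proof -
  obtain C where meas: "g \<in> borel_measurable (lebesgue_on T)"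
    and C: "AE x in lebesgue. x \<in> T \<longrightarrow> norm (g x) \<le> C"
    using assms(1) unfolding in_Linf_def by blast
  show ?thesis
  proof (rule set_integrable_bound)
    have "T \<in> lmeasurable"
      using assms(2,3) bounded_set_imp_lmeasurable by blast
    then show "set_integrable lebesgue T (\<lambda>_. C)"
      unfolding set_integrable_def
      by (intro integrable_scaleR_left integrable_real_indicator) (auto simp: fmeasurable_def)
    show "set_borel_measurable lebesgue T g"
      using meas assms(2) unfolding set_borel_measurable_def
      by (simp add: borel_measurable_restrict_space_iff)
    show "AE x in lebesgue. x \<in> T \<longrightarrow> norm (g x) \<le> norm C"
      using C by eventually_elim auto
  qed
qed

lemma set_integral_spike:
  fixes f :: "'a::euclidean_space \<Rightarrow> real"
  assumes "negligible (S - T)" "negligible (T - S)"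
  shows "set_integrable lebesgue S f \<longleftrightarrow> set_integrable lebesgue T f"
    and "set_integrable lebesgue S f \<Longrightarrow> (LINT x:S|lebesgue. f x) = (LINT x:T|lebesgue. f x)"
proof -
  have null: "negligible {x \<in> S - T. f x \<noteq> 0}" "negligible {x \<in> T - S. f x \<noteq> 0}"
    using assms by (auto intro: negligible_subset)
  show iff: "set_integrable lebesgue S f \<longleftrightarrow> set_integrable lebesgue T f"
    using absolutely_integrable_spike_set_eq[OF null] .
  assume "set_integrable lebesgue S f"
  then show "(LINT x:S|lebesgue. f x) = (LINT x:T|lebesgue. f x)"
    using iff integral_spike_set[OF null] set_lebesgue_integral_eq_integral(2) by metis
qed

lemma set_integral_AE_cong:
  fixes u v :: "'a \<Rightarrow> real"
  assumes u: "set_integrable M A u" and v: "set_borel_measurable M A v"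
    and eq: "AE x in M. x \<in> A \<longrightarrow> u x = v x"
  shows "set_integrable M A v" and "(LINT x:A|M. v x) = (LINT x:A|M. u x)"
proof -
  from eq have "AE x in M. x \<in> A \<longrightarrow> norm (v x) \<le> norm (u x)"
    by eventually_elim auto
  then show "set_integrable M A v"
    by (rule set_integrable_bound[OF u v])
  have "AE x in M. indicator A x *\<^sub>R v x = indicator A x *\<^sub>R u x"
    using eq by eventually_elim (auto simp: indicator_def)
  with u v show "(LINT x:A|M. v x) = (LINT x:A|M. u x)"
    unfolding set_lebesgue_integral_def set_integrable_def set_borel_measurable_def
    by (intro integral_cong_AE) auto
qed

lemma set_integral_change_of_variables:
  fixes F :: "real^'n::{finite,wellorder} \<Rightarrow> real" and g :: "real^'n::_ \<Rightarrow> real^'n::_"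
  assumes "S \<in> sets lebesgue"
    and "\<And>x. x \<in> S \<Longrightarrow> (g has_derivative g' x) (at x within S)"
    and "inj_on g S"
  shows "set_integrable lebesgue (g ` S) F \<longleftrightarrow>
           set_integrable lebesgue S (\<lambda>x. \<bar>det (matrix (g' x))\<bar> * F (g x))"
    and "set_integrable lebesgue (g ` S) F \<Longrightarrow>
           (LINT y:g ` S|lebesgue. F y) = (LINT x:S|lebesgue. \<bar>det (matrix (g' x))\<bar> * F (g x))"
proof -
  have "(\<lambda>x. \<bar>det (matrix (g' x))\<bar> *\<^sub>R vec (F (g x)) :: real^1) absolutely_integrable_on S \<and>
        integral S (\<lambda>x. \<bar>det (matrix (g' x))\<bar> *\<^sub>R vec (F (g x))) = (vec b :: real^1)
      \<longleftrightarrow> (\<lambda>x. vec (F x) :: real^1) absolutely_integrable_on (g ` S) \<and>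
        integral (g ` S) (\<lambda>x. vec (F x)) = (vec b :: real^1)" for b
    by (rule has_absolute_integral_change_of_variables[OF assms])
  then have scalar: "set_integrable lebesgue S (\<lambda>x. \<bar>det (matrix (g' x))\<bar> * F (g x)) \<and>
        integral S (\<lambda>x. \<bar>det (matrix (g' x))\<bar> * F (g x)) = b
      \<longleftrightarrow> set_integrable lebesgue (g ` S) F \<and> integral (g ` S) F = b" for b
    by (simp add: absolutely_integrable_on_1_iff integral_on_1_eq)
  then show iff: "set_integrable lebesgue (g ` S) F \<longleftrightarrow>
      set_integrable lebesgue S (\<lambda>x. \<bar>det (matrix (g' x))\<bar> * F (g x))"
    by blast
  assume int: "set_integrable lebesgue (g ` S) F"
  then have "integral (g ` S) F = integral S (\<lambda>x. \<bar>det (matrix (g' x))\<bar> * F (g x))"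
    using scalar by blast
  then show "(LINT y:g ` S|lebesgue. F y) = (LINT x:S|lebesgue. \<bar>det (matrix (g' x))\<bar> * F (g x))"
    using int iff by (simp add: set_lebesgue_integral_eq_integral(2))
qed

lemma lipschitz_change_of_variables:
  fixes F :: "real^'n::{finite,wellorder} \<Rightarrow> real" and \<psi> :: "real^'n::_ \<Rightarrow> real^'n::_"
  assumes lip: "L-lipschitz_on S \<psi>" and inj: "inj_on \<psi> S" and S: "S \<in> sets lebesgue"
    and Z: "Z \<in> null_sets lebesgue" and der: "\<forall>x\<in>S - Z. (\<psi> has_derivative D x) (at x)"
  shows "\<psi> ` S \<in> sets lebesgue"
    and "set_integrable lebesgue (\<psi> ` S) F \<longleftrightarrow>
           set_integrable lebesgue S (\<lambda>x. \<bar>det (matrix (D x))\<bar> * F (\<psi> x))"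
    and "set_integrable lebesgue (\<psi> ` S) F \<Longrightarrow>
           (LINT y:\<psi> ` S|lebesgue. F y) = (LINT x:S|lebesgue. \<bar>det (matrix (D x))\<bar> * F (\<psi> x))"
proof -
  define S0 where "S0 = S - Z"
  have S0_sets: "S0 \<in> sets lebesgue"
    using S Z by (auto simp: S0_def)
  have der0: "\<And>x. x \<in> S0 \<Longrightarrow> (\<psi> has_derivative D x) (at x within S0)"
    using der by (auto simp: S0_def intro: has_derivative_at_withinI)
  have inj0: "inj_on \<psi> S0"
    using inj by (rule inj_on_subset) (auto simp: S0_def)
  have null_Z: "negligible Z"
    using Z by (simp add: negligible_iff_null_sets)
  then have null_dom: "negligible (S - S0)" "negligible (S0 - S)"
    by (auto simp: S0_def intro: negligible_subset)
  have "negligible (\<psi> ` (S \<inter> Z))"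
    using lip negligible_subset[OF null_Z] by (rule negligible_lipschitz_image) auto
  then have null_img: "negligible (\<psi> ` S - \<psi> ` S0)" "negligible (\<psi> ` S0 - \<psi> ` S)"
    by (auto simp: S0_def intro: negligible_subset)
  have "\<psi> ` S0 \<in> sets lebesgue"
    using S0_sets der0
    by (intro differentiable_image_in_sets_lebesgue) (auto simp: differentiable_on_def differentiable_def)
  moreover have "\<psi> ` S = \<psi> ` S0 \<union> (\<psi> ` S - \<psi> ` S0)"
    by (auto simp: S0_def)
  ultimately show "\<psi> ` S \<in> sets lebesgue"
    using null_img(1) negligible_imp_sets by (metis sets.Un)
  note cov = set_integral_change_of_variables[OF S0_sets der0 inj0, of F]
  note spike_img = set_integral_spike[OF null_img, of F]
  note spike_dom = set_integral_spike[OF null_dom, of "\<lambda>x. \<bar>det (matrix (D x))\<bar> * F (\<psi> x)"]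
  show iff: "set_integrable lebesgue (\<psi> ` S) F \<longleftrightarrow>
      set_integrable lebesgue S (\<lambda>x. \<bar>det (matrix (D x))\<bar> * F (\<psi> x))"
    by (simp only: spike_img(1) cov(1) spike_dom(1))
  assume int: "set_integrable lebesgue (\<psi> ` S) F"
  then have int0: "set_integrable lebesgue (\<psi> ` S0) F"
    by (simp only: spike_img(1))
  have "(LINT y:\<psi> ` S|lebesgue. F y) = (LINT y:\<psi> ` S0|lebesgue. F y)"
    using spike_img(2)[OF int] .
  also have "\<dots> = (LINT x:S0|lebesgue. \<bar>det (matrix (D x))\<bar> * F (\<psi> x))"
    using cov(2) int0 by blast
  also have "\<dots> = (LINT x:S|lebesgue. \<bar>det (matrix (D x))\<bar> * F (\<psi> x))"
    using spike_dom(2) int iff by simp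
  finally show "(LINT y:\<psi> ` S|lebesgue. F y) = (LINT x:S|lebesgue. \<bar>det (matrix (D x))\<bar> * F (\<psi> x))" .
qed

section \<open>Integrals over rational boxes determine a density\<close>

definition rat_boxes :: "'a::euclidean_space set set" where
  "rat_boxes = {box a b | a b. \<forall>i\<in>Basis. a \<bullet> i \<in> \<rat> \<and> b \<bullet> i \<in> \<rat>}"

lemma rat_boxesI: "(\<And>i. i \<in> Basis \<Longrightarrow> a \<bullet> i \<in> \<rat> \<and> b \<bullet> i \<in> \<rat>) \<Longrightarrow> box a b \<in> rat_boxes"
  unfolding rat_boxes_def by blast

lemma countable_rat_boxes: "countable rat_boxes"
proof -
  define vec :: "('a \<Rightarrow> real) \<Rightarrow> 'a" where "vec f = (\<Sum>i\<in>Basis. f i *\<^sub>R i)" for f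
  have "rat_boxes \<subseteq> (\<lambda>(f, g). box (vec f) (vec g)) ` ((Basis \<rightarrow>\<^sub>E \<rat>) \<times> (Basis \<rightarrow>\<^sub>E \<rat>))"
  proof
    fix X :: "'a set" assume "X \<in> rat_boxes"
    then obtain a b where "X = box a b" "\<forall>i\<in>Basis. a \<bullet> i \<in> \<rat> \<and> b \<bullet> i \<in> \<rat>"
      by (auto simp: rat_boxes_def)
    moreover have "vec (restrict (\<lambda>i. c \<bullet> i) Basis) = c" for c
      by (simp add: vec_def euclidean_representation)
    ultimately show "X \<in> (\<lambda>(f, g). box (vec f) (vec g)) ` ((Basis \<rightarrow>\<^sub>E \<rat>) \<times> (Basis \<rightarrow>\<^sub>E \<rat>))"
      by (intro image_eqI[of _ _ "(restrict (\<lambda>i. a \<bullet> i) Basis, restrict (\<lambda>i. b \<bullet> i) Basis)"]) auto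
  qed
  moreover have "countable ((Basis \<rightarrow>\<^sub>E \<rat>) \<times> (Basis \<rightarrow>\<^sub>E (\<rat> :: real set)))"
    by (intro countable_SIGMA countable_PiE countable_rat) auto
  ultimately show ?thesis
    by (rule countable_subset[OF _ countable_image])
qed

lemma Int_stable_rat_boxes: "Int_stable rat_boxes"
proof (rule Int_stableI)
  fix X Y :: "'a set" assume "X \<in> rat_boxes" "Y \<in> rat_boxes"
  then obtain a b c d where
    "X = box a b" "\<forall>i\<in>Basis. a \<bullet> i \<in> \<rat> \<and> b \<bullet> i \<in> \<rat>"
    "Y = box c d" "\<forall>i\<in>Basis. c \<bullet> i \<in> \<rat> \<and> d \<bullet> i \<in> \<rat>"
    by (auto simp: rat_boxes_def)
  moreover have "X \<inter> Y = box (\<Sum>i\<in>Basis. max (a \<bullet> i) (c \<bullet> i) *\<^sub>R i) (\<Sum>i\<in>Basis. min (b \<bullet> i) (d \<bullet> i) *\<^sub>R i)"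
    using calculation box_Int_box by simp
  ultimately show "X \<inter> Y \<in> rat_boxes"
    by (simp only:) (rule rat_boxesI, simp add: max_def min_def)
qed

lemma sets_borel_eq_rat_boxes: "sets (borel :: 'a::euclidean_space measure) = sigma_sets UNIV rat_boxes"
proof
  have "rat_boxes \<subseteq> sets borel"
    by (auto simp: rat_boxes_def)
  from sets.sigma_sets_subset[OF this] show "sigma_sets UNIV rat_boxes \<subseteq> sets borel"
    by simp
  have open_in: "M \<in> sigma_sets UNIV rat_boxes" if "open M" for M :: "'a set"
  proof -
    define a :: "('a \<Rightarrow> real \<times> real) \<Rightarrow> 'a" where "a f = (\<Sum>i\<in>Basis. fst (f i) *\<^sub>R i)" for f
    define b :: "('a \<Rightarrow> real \<times> real) \<Rightarrow> 'a" where "b f = (\<Sum>i\<in>Basis. snd (f i) *\<^sub>R i)" for f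
    define I where "I = {f \<in> Basis \<rightarrow>\<^sub>E \<rat> \<times> \<rat>. box (a f) (b f) \<subseteq> M}"
    have M: "M = \<Union> ((\<lambda>f. box (a f) (b f)) ` I)"
      using open_UNION_box[OF that] by (simp add: a_def b_def I_def)
    have "countable (Basis \<rightarrow>\<^sub>E (\<rat> :: real set) \<times> \<rat>)"
      by (intro countable_PiE countable_SIGMA countable_rat) auto
    then have "countable I"
      by (rule countable_subset[rotated]) (auto simp: I_def)
    moreover have "(\<lambda>f. box (a f) (b f)) ` I \<subseteq> sigma_sets UNIV rat_boxes"
      by (auto simp: I_def a_def b_def PiE_iff mem_Times_iff intro!: sigma_sets.Basic rat_boxesI)
    ultimately show ?thesis
      unfolding M by (intro sigma_algebra.countable_Union[OF sigma_algebra_sigma_sets] countable_image) auto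
  qed
  show "sets (borel :: 'a measure) \<subseteq> sigma_sets UNIV rat_boxes"
    unfolding sets_borel
    by (rule sigma_sets_mono) (auto intro: open_in)
qed

lemma set_integral_borel_zero_if_rat_boxes:
  fixes k :: "'a::euclidean_space \<Rightarrow> real"
  assumes k: "integrable lebesgue k"
    and boxes: "\<And>X. X \<in> insert UNIV rat_boxes \<Longrightarrow> (LINT x:X|lebesgue. k x) = 0"
    and C: "C \<in> sets borel"
  shows "(LINT x:C|lebesgue. k x) = 0"
proof -
  have set_int: "set_integrable lebesgue A k" if "A \<in> sets lebesgue" for A
    using integrable_mult_indicator[OF that k] by (simp add: set_integrable_def)
  have "Int_stable rat_boxes" "rat_boxes \<subseteq> Pow UNIV" "C \<in> sigma_sets UNIV rat_boxes"
    using Int_stable_rat_boxes C by (simp_all add: sets_borel_eq_rat_boxes)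
  then show ?thesis
  proof (induction rule: sigma_sets_induct_disjoint)
    case (basic A)
    then show ?case
      by (simp add: boxes)
  next
    case empty
    then show ?case
      by (simp add: set_lebesgue_integral_def)
  next
    case (compl A)
    then have "A \<in> sets lebesgue"
      by (simp flip: sets_borel_eq_rat_boxes)
    then have "set_integrable lebesgue (UNIV - A) k" "set_integrable lebesgue A k"
      using sets.compl_sets[of A lebesgue] by (auto intro: set_int)
    moreover have "(UNIV - A) \<inter> A = {}"
      by blast
    ultimately have "(LINT x:UNIV|lebesgue. k x) = (LINT x:UNIV - A|lebesgue. k x) + (LINT x:A|lebesgue. k x)"
      using set_integral_Un[of "UNIV - A" A] by (simp add: Un_absorb1)
    then show ?case
      using compl.IH boxes[of UNIV] by simp
  next
    case (union A)
    then have "A i \<in> sets lebesgue" for i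
      by (auto simp flip: sets_borel_eq_rat_boxes)
    then have "(LINT x:(\<Union>i. A i)|lebesgue. k x) = (\<Sum>i. (LINT x:A i|lebesgue. k x))"
      using union.hyps(1) k set_int
      by (intro lebesgue_integral_countable_add) (auto simp: disjoint_family_on_def)
    then show ?case
      using union.IH by simp
  qed
qed

lemma AE_zero_if_rat_box_integrals_zero:
  fixes k :: "'a::euclidean_space \<Rightarrow> real"
  assumes k: "integrable lebesgue k"
    and boxes: "\<And>X. X \<in> insert UNIV rat_boxes \<Longrightarrow> (LINT x:X|lebesgue. k x) = 0"
  shows "AE x in lebesgue. k x = 0"
proof -
  have "(LINT x:A|lebesgue. k x) = 0" if A: "A \<in> sets lebesgue" for A
  proof -
    obtain C N where "fsigma C" "N \<in> null_sets lebesgue" "C \<union> N = A"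
      using lebesgue_set_almost_fsigma[OF A] by metis
    then have C: "C \<in> sets borel" "C \<in> sets lebesgue"
      by (auto elim!: fsigma.cases)
    have "(LINT x:A|lebesgue. k x) = (LINT x:C|lebesgue. k x)"
    proof (rule set_integral_cong_set)
      show "set_borel_measurable lebesgue C k" "set_borel_measurable lebesgue A k"
        using integrable_mult_indicator[OF C(2) k] integrable_mult_indicator[OF A k]
        by (auto simp: set_borel_measurable_def)
      show "AE x in lebesgue. (x \<in> C) = (x \<in> A)"
        using AE_not_in[OF \<open>N \<in> null_sets lebesgue\<close>] by eventually_elim (use \<open>C \<union> N = A\<close> in auto)
    qed
    then show ?thesis
      using set_integral_borel_zero_if_rat_boxes[OF k boxes C(1)] by simp
  qed
  then have "AE x in lebesgue. k x = (\<lambda>x. 0::real) x"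
    by (intro density_unique_real[OF k]) (auto simp: set_lebesgue_integral_def)
  then show ?thesis
    by simp
qed

text \<open>Mass balance is tested only on the countably many sets \<open>X \<inter> V\<close>, so that the
  exceptional null sets of times of all of them can be united.\<close>

definition box_mass_balance :: "'a::euclidean_space set \<Rightarrow> ('a \<Rightarrow> 'a) \<Rightarrow> ('a \<Rightarrow> real) \<Rightarrow> ('a \<Rightarrow> real) \<Rightarrow> bool" where
  "box_mass_balance V \<psi> \<rho> \<rho>0 \<longleftrightarrow>
     (\<forall>X\<in>insert UNIV rat_boxes. (LINT y:\<psi> ` (X \<inter> V)|lebesgue. \<rho> y) = (LINT x:X \<inter> V|lebesgue. \<rho>0 x))"

lemma jacobian_density_eq:
  fixes \<psi> :: "real^'n::{finite,wellorder} \<Rightarrow> real^'n::_" and \<rho> \<rho>0 :: "real^'n::_ \<Rightarrow> real"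
  assumes V: "open V" and lip: "L-lipschitz_on V \<psi>" and inj: "inj_on \<psi> V"
    and Z: "Z \<in> null_sets lebesgue" and der: "\<forall>x\<in>V - Z. (\<psi> has_derivative D x) (at x)"
    and \<rho>: "set_integrable lebesgue (\<psi> ` V) \<rho>" and \<rho>0: "set_integrable lebesgue V \<rho>0"
    and mass: "box_mass_balance V \<psi> \<rho> \<rho>0"
  shows "AE x in lebesgue. x \<in> V \<longrightarrow> \<bar>det (matrix (D x))\<bar> * \<rho> (\<psi> x) = \<rho>0 x"
proof -
  define J where "J x = \<bar>det (matrix (D x))\<bar> * \<rho> (\<psi> x)" for x
  have cov: "set_integrable lebesgue E J \<and> (LINT y:\<psi> ` E|lebesgue. \<rho> y) = (LINT x:E|lebesgue. J x)"
    if E: "E \<subseteq> V" "E \<in> sets lebesgue" for E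
  proof -
    have "\<forall>x\<in>E - Z. (\<psi> has_derivative D x) (at x)"
      using der E(1) by blast
    note cov = lipschitz_change_of_variables[OF lipschitz_on_subset[OF lip E(1)]
        inj_on_subset[OF inj E(1)] E(2) Z this]
    have "set_integrable lebesgue (\<psi> ` E) \<rho>"
      using cov(1) E(1) by (intro set_integrable_subset[OF \<rho>]) auto
    then show ?thesis
      using cov(2,3)[of \<rho>] unfolding J_def by auto
  qed
  define k where "k = (\<lambda>x. indicator V x *\<^sub>R (J x - \<rho>0 x))"
  have "set_integrable lebesgue V (\<lambda>x. J x - \<rho>0 x)"
    using cov[of V] V \<rho>0 by (intro set_integral_diff(1)) auto
  then have "integrable lebesgue k"
    by (simp add: k_def set_integrable_def)
  moreover have "(LINT x:X|lebesgue. k x) = 0" if X: "X \<in> insert UNIV rat_boxes" for X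
  proof -
    have mass_X: "(LINT y:\<psi> ` (X \<inter> V)|lebesgue. \<rho> y) = (LINT x:X \<inter> V|lebesgue. \<rho>0 x)"
      using mass X unfolding box_mass_balance_def by blast
    have "X \<inter> V \<in> sets lebesgue"
      using X V by (auto simp: rat_boxes_def)
    then have "(LINT x:X|lebesgue. k x) = (LINT x:X \<inter> V|lebesgue. J x - \<rho>0 x)"
      unfolding set_lebesgue_integral_def k_def by (simp add: indicator_inter_arith mult.assoc)
    also have "\<dots> = (LINT x:X \<inter> V|lebesgue. J x) - (LINT x:X \<inter> V|lebesgue. \<rho>0 x)"
      using cov[of "X \<inter> V"] \<open>X \<inter> V \<in> sets lebesgue\<close>
      by (intro set_integral_diff(2) set_integrable_subset[OF \<rho>0]) auto
    also have "\<dots> = 0"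
      using cov[of "X \<inter> V"] \<open>X \<inter> V \<in> sets lebesgue\<close> mass_X by simp
    finally show ?thesis .
  qed
  ultimately have "AE x in lebesgue. k x = 0"
    by (rule AE_zero_if_rat_box_integrals_zero)
  then show ?thesis
    by eventually_elim (simp add: k_def J_def indicator_def)
qed

lemma set_integral_transport:
  fixes \<psi> :: "real^'n::{finite,wellorder} \<Rightarrow> real^'n::_" and \<rho> \<rho>0 f F :: "real^'n::_ \<Rightarrow> real"
  assumes lip: "L-lipschitz_on A \<psi>" and inj: "inj_on \<psi> A" and A: "A \<in> sets lebesgue"
    and Z: "Z \<in> null_sets lebesgue" and der: "\<forall>x\<in>A - Z. (\<psi> has_derivative D x) (at x)"
    and jac: "AE x in lebesgue. x \<in> A \<longrightarrow> \<bar>det (matrix (D x))\<bar> * \<rho> (\<psi> x) = \<rho>0 x"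
    and \<rho>: "set_integrable lebesgue (\<psi> ` A) \<rho>"
    and f: "f \<in> borel_measurable (lebesgue_on A)"
    and f\<rho>0: "set_integrable lebesgue A (\<lambda>x. f x * \<rho>0 x)"
    and F: "\<And>x. x \<in> A \<Longrightarrow> F (\<psi> x) = f x"
  shows "set_integrable lebesgue (\<psi> ` A) (\<lambda>y. F y * \<rho> y)"
    and "(LINT y:\<psi> ` A|lebesgue. F y * \<rho> y) = (LINT x:A|lebesgue. f x * \<rho>0 x)"
proof -
  note cov = lipschitz_change_of_variables[OF lip inj A Z der]
  define J where "J x = \<bar>det (matrix (D x))\<bar> * \<rho> (\<psi> x)" for x
  define G where "G x = \<bar>det (matrix (D x))\<bar> * (F (\<psi> x) * \<rho> (\<psi> x))" for x
  have "set_integrable lebesgue A J"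
    using cov(2) \<rho> unfolding J_def by blast
  then have "(\<lambda>x. indicator A x *\<^sub>R J x) \<in> borel_measurable lebesgue"
    by (simp add: set_integrable_def)
  moreover have "(\<lambda>x. indicator A x *\<^sub>R f x) \<in> borel_measurable lebesgue"
    using f A by (simp add: borel_measurable_restrict_space_iff)
  moreover have "(\<lambda>x. indicator A x *\<^sub>R G x) = (\<lambda>x. (indicator A x *\<^sub>R f x) * (indicator A x *\<^sub>R J x))"
    by (auto simp: fun_eq_iff indicator_def G_def J_def F)
  ultimately have "set_borel_measurable lebesgue A G"
    unfolding set_borel_measurable_def by simp
  moreover have "AE x in lebesgue. x \<in> A \<longrightarrow> f x * \<rho>0 x = G x"
    using jac by eventually_elim (auto simp: G_def F mult.left_commute)
  ultimately have G: "set_integrable lebesgue A G"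
    "(LINT x:A|lebesgue. G x) = (LINT x:A|lebesgue. f x * \<rho>0 x)"
    using set_integral_AE_cong[OF f\<rho>0] by blast+
  then show int: "set_integrable lebesgue (\<psi> ` A) (\<lambda>y. F y * \<rho> y)"
    using cov(2) unfolding G_def by blast
  show "(LINT y:\<psi> ` A|lebesgue. F y * \<rho> y) = (LINT x:A|lebesgue. f x * \<rho>0 x)"
    using cov(3) int G(2) unfolding G_def by simp
qed

text \<open>What the argument uses of a time slice of \<open>Reg\<^sup>+\<^sub>L\<^sub>i\<^sub>p\<close>.\<close>

definition regular_lipschitz_on :: "'a::euclidean_space set \<Rightarrow> ('a \<Rightarrow> 'a) \<Rightarrow> bool" where
  "regular_lipschitz_on P \<psi> \<longleftrightarrow>
     (\<exists>L. L-lipschitz_on (closure P) \<psi>) \<and> inj_on \<psi> (closure P) \<and> open (\<psi> ` P) \<and>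
     (\<exists>Z D. Z \<in> null_sets lebesgue \<and> (\<forall>x\<in>P - Z. (\<psi> has_derivative D x) (at x)))"

lemma regular_lipschitz_on_transport:
  fixes \<psi> :: "real^3 \<Rightarrow> real^3" and \<rho> \<rho>0 f F :: "real^3 \<Rightarrow> real"
  assumes \<psi>: "regular_lipschitz_on P \<psi>" and V: "V \<subseteq> P" "open V" "bounded V"
    and \<rho>: "in_Linf (\<psi> ` V) \<rho>" and \<rho>0: "in_Linf V \<rho>0" and f: "in_Linf V f"
    and mass: "box_mass_balance V \<psi> \<rho> \<rho>0"
    and E: "E \<subseteq> V" "E \<in> sets lebesgue" and F: "\<And>x. x \<in> E \<Longrightarrow> F (\<psi> x) = f x"
  shows "\<psi> ` E \<in> sets lebesgue"
    and "set_integrable lebesgue (\<psi> ` E) (\<lambda>y. F y * \<rho> y)"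
    and "(LINT y:\<psi> ` E|lebesgue. F y * \<rho> y) = (LINT x:E|lebesgue. f x * \<rho>0 x)"
proof -
  obtain L Z D where "L-lipschitz_on (closure P) \<psi>" "inj_on \<psi> (closure P)"
    and Z: "Z \<in> null_sets lebesgue" and der_P: "\<forall>x\<in>P - Z. (\<psi> has_derivative D x) (at x)"
    using \<psi> unfolding regular_lipschitz_on_def by blast
  moreover have "V \<subseteq> closure P"
    using V(1) closure_subset by blast
  ultimately have lip: "L-lipschitz_on V \<psi>" and inj: "inj_on \<psi> V"
    by (auto intro: lipschitz_on_subset inj_on_subset)
  have der: "\<forall>x\<in>V - Z. (\<psi> has_derivative D x) (at x)"
    using der_P V(1) by blast
  have "bounded (\<psi> ` V)"
    using V(3) lip by (meson bounded_uniformly_continuous_image lipschitz_on_uniformly_continuous)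
  then have \<rho>_V: "set_integrable lebesgue (\<psi> ` V) \<rho>"
    using lipschitz_change_of_variables(1)[OF lip inj _ Z der] V(2) by (intro in_Linf_set_integrable \<rho>) auto
  have "set_integrable lebesgue V \<rho>0"
    using V by (intro in_Linf_set_integrable \<rho>0) auto
  then have jac: "AE x in lebesgue. x \<in> V \<longrightarrow> \<bar>det (matrix (D x))\<bar> * \<rho> (\<psi> x) = \<rho>0 x"
    by (rule jacobian_density_eq[OF V(2) lip inj Z der \<rho>_V _ mass])
  note lip_E = lipschitz_on_subset[OF lip E(1)] and inj_E = inj_on_subset[OF inj E(1)]
  have der_E: "\<forall>x\<in>E - Z. (\<psi> has_derivative D x) (at x)"
    using der E(1) by blast
  show "\<psi> ` E \<in> sets lebesgue"
    using lipschitz_change_of_variables(1)[OF lip_E inj_E E(2) Z der_E] .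
  then have "set_integrable lebesgue (\<psi> ` E) \<rho>"
    using E(1) by (intro set_integrable_subset[OF \<rho>_V]) auto
  moreover have "f \<in> borel_measurable (lebesgue_on E)"
    using in_Linf_subset[OF f E(1)] unfolding in_Linf_def by blast
  moreover have "set_integrable lebesgue E (\<lambda>x. f x * \<rho>0 x)"
    using E V(3) by (intro in_Linf_set_integrable in_Linf_mult in_Linf_subset[OF f] in_Linf_subset[OF \<rho>0])
      (auto intro: bounded_subset)
  moreover have "AE x in lebesgue. x \<in> E \<longrightarrow> \<bar>det (matrix (D x))\<bar> * \<rho> (\<psi> x) = \<rho>0 x"
    using jac by eventually_elim (use E(1) in blast)
  ultimately show "set_integrable lebesgue (\<psi> ` E) (\<lambda>y. F y * \<rho> y)"
    "(LINT y:\<psi> ` E|lebesgue. F y * \<rho> y) = (LINT x:E|lebesgue. f x * \<rho>0 x)"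
    using set_integral_transport[OF lip_E inj_E E(2) Z der_E, where F = F] F by blast+
qed

section \<open>Motions glued from two Lipschitz pieces\<close>

text \<open>The shape of an admissible motion at a fixed time: \<open>P\<close>, \<open>Q\<close> are the solid and fluid
  regions and \<open>\<psi>\<close>, \<open>\<kappa>\<close> the Lipschitz extensions of the motion from their closures.\<close>

definition glued_motion ::
  "'a::topological_space set \<Rightarrow> ('a \<Rightarrow> 'b) \<Rightarrow> 'a set \<Rightarrow> ('a \<Rightarrow> 'b) \<Rightarrow> 'a set \<Rightarrow> ('a \<Rightarrow> 'b) \<Rightarrow> bool" where
  "glued_motion B \<phi> P \<psi> Q \<kappa> \<longleftrightarrow>
     (\<forall>x\<in>P. \<phi> x = \<psi> x) \<and> (\<forall>x\<in>Q. \<phi> x = \<kappa> x) \<and> \<phi> ` P \<inter> \<phi> ` Q = {} \<and>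
     (\<forall>x\<in>B - (P \<union> Q). (x \<in> closure P \<and> \<phi> x = \<psi> x) \<or> (x \<in> closure Q \<and> \<phi> x = \<kappa> x))"

lemma glued_motion_sym: "glued_motion B \<phi> P \<psi> Q \<kappa> \<Longrightarrow> glued_motion B \<phi> Q \<kappa> P \<psi>"
  unfolding glued_motion_def by blast

lemma glued_motion_closure_image_disjoint:
  assumes glued: "glued_motion B \<phi> P \<psi> Q \<kappa>"
    and \<psi>: "regular_lipschitz_on P \<psi>" and \<kappa>: "regular_lipschitz_on Q \<kappa>"
  shows "\<kappa> ` closure Q \<inter> \<phi> ` P = {}"
proof -
  have \<phi>P: "\<forall>y\<in>P. \<phi> y = \<psi> y" and \<phi>Q: "\<forall>y\<in>Q. \<phi> y = \<kappa> y" and disj: "\<phi> ` P \<inter> \<phi> ` Q = {}"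
    using glued unfolding glued_motion_def by blast+
  have "open (\<psi> ` P)"
    using \<psi> unfolding regular_lipschitz_on_def by blast
  then have "open (\<phi> ` P)"
    using \<phi>P by (metis image_cong)
  have "continuous_on (closure Q) \<kappa>"
    using \<kappa> lipschitz_on_continuous_on unfolding regular_lipschitz_on_def by blast
  then have "\<kappa> ` closure Q \<subseteq> closure (\<kappa> ` Q)"
    by (rule image_closure_subset) (auto intro: closure_subset[THEN subsetD])
  also have "\<kappa> ` Q = \<phi> ` Q"
    using \<phi>Q by (metis image_cong)
  finally show ?thesis
    using open_Int_closure_eq_empty[OF \<open>open (\<phi> ` P)\<close>] disj by blast
qed

lemma glued_motion_inv_into:
  assumes glued: "glued_motion B \<phi> P \<psi> Q \<kappa>"
    and \<psi>: "regular_lipschitz_on P \<psi>" and \<kappa>: "regular_lipschitz_on Q \<kappa>" and x: "x \<in> P \<inter> B"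
  shows "inv_into B \<phi> (\<phi> x) = x"
  unfolding inv_into_def
proof (rule some_equality)
  show "x \<in> B \<and> \<phi> x = \<phi> x"
    using x by simp
  have \<phi>P: "\<forall>y\<in>P. \<phi> y = \<psi> y" and \<phi>Q: "\<forall>y\<in>Q. \<phi> y = \<kappa> y" and disj: "\<phi> ` P \<inter> \<phi> ` Q = {}"
    and rest: "\<forall>y\<in>B - (P \<union> Q). (y \<in> closure P \<and> \<phi> y = \<psi> y) \<or> (y \<in> closure Q \<and> \<phi> y = \<kappa> y)"
    using glued unfolding glued_motion_def by blast+
  have inj: "inj_on \<psi> (closure P)"
    using \<psi> unfolding regular_lipschitz_on_def by blast
  have x\<psi>: "\<phi> x = \<psi> x" "x \<in> closure P"
    using x \<phi>P closure_subset by auto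
  fix y assume y: "y \<in> B \<and> \<phi> y = \<phi> x"
  consider "y \<in> closure P" "\<phi> y = \<psi> y" | "y \<in> Q" | "y \<in> closure Q" "\<phi> y = \<kappa> y"
    using rest y \<phi>P closure_subset by blast
  then show "y = x"
  proof cases
    case 1
    then show ?thesis
      using y x\<psi> inj by (metis inj_onD)
  next
    case 2
    then show ?thesis
      using y x disj by blast
  next
    case 3
    then show ?thesis
      using y x glued_motion_closure_image_disjoint[OF glued \<psi> \<kappa>] by blast
  qed
qed

lemma negligible_glued_motion_image:
  fixes \<phi> \<psi> \<kappa> :: "'a::euclidean_space \<Rightarrow> 'a"
  assumes glued: "glued_motion B \<phi> P \<psi> Q \<kappa>"
    and \<psi>: "regular_lipschitz_on P \<psi>" and \<kappa>: "regular_lipschitz_on Q \<kappa>"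
    and N: "negligible N" "N \<subseteq> B - (P \<union> Q)"
  shows "negligible (\<phi> ` N)"
proof -
  obtain L M where "L-lipschitz_on (closure P) \<psi>" "M-lipschitz_on (closure Q) \<kappa>"
    using \<psi> \<kappa> unfolding regular_lipschitz_on_def by blast
  then have "negligible (\<psi> ` (N \<inter> closure P))" "negligible (\<kappa> ` (N \<inter> closure Q))"
    using negligible_subset[OF N(1)] by (auto intro!: negligible_lipschitz_image)
  moreover have "\<phi> ` N \<subseteq> \<psi> ` (N \<inter> closure P) \<union> \<kappa> ` (N \<inter> closure Q)"
    using glued N(2) unfolding glued_motion_def by fastforce
  ultimately show ?thesis
    by (meson negligible_Un negligible_subset)
qed

lemma glued_motion_region_transport:
  fixes \<phi> \<psi> \<kappa> :: "real^3 \<Rightarrow> real^3" and \<rho> \<rho>0 f :: "real^3 \<Rightarrow> real"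
  assumes B: "open B" "bounded B" and P: "open P" and A: "A \<subseteq> B" "A \<in> sets lebesgue"
    and glued: "glued_motion B \<phi> P \<psi> Q \<kappa>"
    and \<psi>: "regular_lipschitz_on P \<psi>" and \<kappa>: "regular_lipschitz_on Q \<kappa>"
    and \<rho>: "in_Linf (\<phi> ` B) \<rho>" and \<rho>0: "in_Linf B \<rho>0" and f: "in_Linf B f"
    and mass: "box_mass_balance (P \<inter> B) \<phi> \<rho> \<rho>0"
  shows "\<phi> ` (A \<inter> P) \<in> sets lebesgue"
    and "set_integrable lebesgue (\<phi> ` (A \<inter> P)) (\<lambda>y. f (inv_into B \<phi> y) * \<rho> y)"
    and "(LINT y:\<phi> ` (A \<inter> P)|lebesgue. f (inv_into B \<phi> y) * \<rho> y) = (LINT x:A \<inter> P|lebesgue. f x * \<rho>0 x)"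
proof -
  have \<phi>\<psi>: "\<phi> x = \<psi> x" if "x \<in> P" for x
    using glued that unfolding glued_motion_def by blast
  then have img: "\<phi> ` E = \<psi> ` E" if "E \<subseteq> P" for E
    using that by (auto intro!: image_cong)
  have V: "P \<inter> B \<subseteq> P" "open (P \<inter> B)" "bounded (P \<inter> B)"
    using B P by (auto intro: bounded_subset)
  have "\<psi> ` (P \<inter> B) \<subseteq> \<phi> ` B"
    using img[OF V(1)] by auto
  then have \<rho>_V: "in_Linf (\<psi> ` (P \<inter> B)) \<rho>"
    by (rule in_Linf_subset[OF \<rho>])
  have "\<phi> ` (X \<inter> (P \<inter> B)) = \<psi> ` (X \<inter> (P \<inter> B))" for X
    by (rule img) auto
  then have mass_\<psi>: "box_mass_balance (P \<inter> B) \<psi> \<rho> \<rho>0"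
    using mass unfolding box_mass_balance_def by simp
  have E: "A \<inter> P \<subseteq> P \<inter> B" "A \<inter> P \<in> sets lebesgue"
    using A P by auto
  have "f (inv_into B \<phi> (\<psi> x)) = f x" if "x \<in> A \<inter> P" for x
    using glued_motion_inv_into[OF glued \<psi> \<kappa>, of x] \<phi>\<psi>[of x] that A(1) by auto
  note transport = regular_lipschitz_on_transport[OF \<psi> V \<rho>_V in_Linf_subset[OF \<rho>0 Int_lower2]
      in_Linf_subset[OF f Int_lower2] mass_\<psi> E this]
  show "\<phi> ` (A \<inter> P) \<in> sets lebesgue"
    "set_integrable lebesgue (\<phi> ` (A \<inter> P)) (\<lambda>y. f (inv_into B \<phi> y) * \<rho> y)"
    "(LINT y:\<phi> ` (A \<inter> P)|lebesgue. f (inv_into B \<phi> y) * \<rho> y) = (LINT x:A \<inter> P|lebesgue. f x * \<rho>0 x)"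
    using transport img[of "A \<inter> P"] by auto
qed

lemma glued_motion_transport:
  fixes \<phi> \<psi> \<kappa> :: "real^3 \<Rightarrow> real^3" and \<rho> \<rho>0 f :: "real^3 \<Rightarrow> real"
  assumes B: "open B" "bounded B" and P: "open P" and Q: "open Q"
    and interface: "negligible (B - (P \<union> Q))" and A: "A \<subseteq> B" "A \<in> sets lebesgue"
    and glued: "glued_motion B \<phi> P \<psi> Q \<kappa>"
    and \<psi>: "regular_lipschitz_on P \<psi>" and \<kappa>: "regular_lipschitz_on Q \<kappa>"
    and \<rho>: "in_Linf (\<phi> ` B) \<rho>" and \<rho>0: "in_Linf B \<rho>0" and f: "in_Linf B f"
    and mass_P: "box_mass_balance (P \<inter> B) \<phi> \<rho> \<rho>0" and mass_Q: "box_mass_balance (Q \<inter> B) \<phi> \<rho> \<rho>0"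
  shows "(LINT y:\<phi> ` A|lebesgue. f (inv_into B \<phi> y) * \<rho> y) = (LINT x:A|lebesgue. f x * \<rho>0 x)"
proof -
  define H where "H y = f (inv_into B \<phi> y) * \<rho> y" for y
  note P_part = glued_motion_region_transport[OF B P A glued \<psi> \<kappa> \<rho> \<rho>0 f mass_P, folded H_def]
  note Q_part = glued_motion_region_transport[OF B Q A glued_motion_sym[OF glued] \<kappa> \<psi> \<rho> \<rho>0 f mass_Q,
      folded H_def]
  have sets_AP_AQ: "A \<inter> P \<in> sets lebesgue" "A \<inter> Q \<in> sets lebesgue"
    using A P Q by auto
  have disj: "\<phi> ` (A \<inter> P) \<inter> \<phi> ` (A \<inter> Q) = {}" "(A \<inter> P) \<inter> (A \<inter> Q) = {}"
    using glued unfolding glued_motion_def by blast+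
  have null_A: "negligible (A - (P \<union> Q))"
    using A(1) by (intro negligible_subset[OF interface]) blast
  then have "negligible (\<phi> ` (A - (P \<union> Q)))"
    using A(1) by (intro negligible_glued_motion_image[OF glued \<psi> \<kappa>]) auto
  then have null1: "negligible (\<phi> ` A - (\<phi> ` (A \<inter> P) \<union> \<phi> ` (A \<inter> Q)))"
    by (rule negligible_subset) blast
  have null2: "negligible ((\<phi> ` (A \<inter> P) \<union> \<phi> ` (A \<inter> Q)) - \<phi> ` A)"
    by (rule negligible_subset[OF negligible_empty]) blast
  have "(LINT y:\<phi> ` A|lebesgue. H y) = (LINT y:\<phi> ` (A \<inter> P) \<union> \<phi> ` (A \<inter> Q)|lebesgue. H y)"
    using set_integral_spike(2)[OF null2 null1 set_integrable_Un[OF P_part(2) Q_part(2) P_part(1) Q_part(1)]]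
    by simp
  also have "\<dots> = (LINT x:A \<inter> P|lebesgue. f x * \<rho>0 x) + (LINT x:A \<inter> Q|lebesgue. f x * \<rho>0 x)"
    using set_integral_Un[OF disj(1) P_part(2) Q_part(2)] P_part(3) Q_part(3) by simp
  also have "\<dots> = (LINT x:(A \<inter> P) \<union> (A \<inter> Q)|lebesgue. f x * \<rho>0 x)"
    using A B(2) sets_AP_AQ
    by (intro set_integral_Un[OF disj(2), symmetric] in_Linf_set_integrable in_Linf_mult
        in_Linf_subset[OF f] in_Linf_subset[OF \<rho>0]) (auto intro: bounded_subset)
  also have "\<dots> = (LINT x:A|lebesgue. f x * \<rho>0 x)"
    using A B(2) sets.Un[OF sets_AP_AQ]
    by (intro set_integral_spike(2) in_Linf_set_integrable in_Linf_mult
        in_Linf_subset[OF f] in_Linf_subset[OF \<rho>0]) (auto intro: bounded_subset negligible_subset[OF null_A])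
  finally show ?thesis
    unfolding H_def .
qed

lemma lipschitz_on_section:
  assumes "L-lipschitz_on (S \<times> I) (\<lambda>(x, t). \<psi> t x)" "t \<in> I"
  shows "L-lipschitz_on S (\<psi> t)"
proof (rule lipschitz_onI)
  show "0 \<le> L"
    using assms(1) by (rule lipschitz_on_nonneg)
  fix a b assume "a \<in> S" "b \<in> S"
  then show "dist (\<psi> t a) (\<psi> t b) \<le> L * dist a b"
    using lipschitz_onD[OF assms(1), of "(a, t)" "(b, t)"] assms(2) by (simp add: dist_Pair_Pair)
qed

lemma reg_lip_pos_regular_lipschitz_on:
  assumes "reg_lip_pos V I t0 \<psi>" "t \<in> I"
  shows "regular_lipschitz_on V (\<psi> t)"
proof -
  obtain L where "L-lipschitz_on (closure V \<times> I) (\<lambda>(x, t). \<psi> t x)"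
    using assms(1) unfolding reg_lip_pos_def by blast
  then have lip: "L-lipschitz_on (closure V) (\<psi> t)"
    using assms(2) by (rule lipschitz_on_section)
  have "AE x in lebesgue. x \<in> V \<longrightarrow> (\<exists>D. (\<psi> t has_derivative D) (at x) \<and> det (matrix D) > 0)"
    using assms unfolding reg_lip_pos_def by blast
  then obtain N where N: "N \<in> null_sets lebesgue"
    "\<And>x. x \<in> space lebesgue - N \<Longrightarrow> x \<in> V \<longrightarrow> (\<exists>D. (\<psi> t has_derivative D) (at x) \<and> det (matrix D) > 0)"
    by (rule AE_E3) blast
  have "(\<psi> t has_derivative (SOME D. (\<psi> t has_derivative D) (at x))) (at x)" if "x \<in> V - N" for x
    using N(2)[of x] that by (auto intro: someI_ex[where P = "\<lambda>D. (\<psi> t has_derivative D) (at x)"])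
  then have der: "\<forall>x\<in>V - N. (\<psi> t has_derivative (SOME D. (\<psi> t has_derivative D) (at x))) (at x)"
    by blast
  moreover have "open (\<psi> t ` V)" "inj_on (\<psi> t) (closure V)"
    using assms unfolding reg_lip_pos_def by blast+
  ultimately show ?thesis
    unfolding regular_lipschitz_on_def using lip N(1)
    by (intro conjI exI[of _ L] exI[of _ N] exI[of _ "\<lambda>x. SOME D. (\<psi> t has_derivative D) (at x)"]) auto
qed

lemma open_region_union: "open (region_union K V)"
  by (simp add: region_union_def)

lemma composite_earth_modelD:
  assumes "composite_earth_model B KF VF KS VS"
  shows "lipschitz_domain B" "finite KF" "finite KS"
    "\<forall>k\<in>KF. lipschitz_domain (VF k)" "\<forall>k\<in>KS. lipschitz_domain (VS k)"
    "B \<subseteq> (\<Union>k\<in>KF. VF k) \<union> (\<Union>k\<in>KS. VS k) \<union> interior_boundary B KF VF KS VS"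
proof -
  note model = assms[unfolded composite_earth_model_def]
  show "lipschitz_domain B" "finite KF" "finite KS"
    "\<forall>k\<in>KF. lipschitz_domain (VF k)" "\<forall>k\<in>KS. lipschitz_domain (VS k)"
    using model by - (elim conjE, assumption)+
  show "B \<subseteq> (\<Union>k\<in>KF. VF k) \<union> (\<Union>k\<in>KS. VS k) \<union> interior_boundary B KF VF KS VS"
    using model by (elim conjE) (erule equalityD1)
qed

lemma composite_earth_model_interface_negligible:
  assumes "composite_earth_model B KF VF KS VS"
  shows "negligible (B - (region_union KS VS \<union> region_union KF VF))"
proof -
  note model = composite_earth_modelD[OF assms]
  have sub: "(\<Union>k\<in>K. V k) \<subseteq> region_union K V" if "\<forall>k\<in>K. lipschitz_domain (V k)" for K V
    unfolding region_union_def
  proof (rule interior_maximal)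
    show "(\<Union>k\<in>K. V k) \<subseteq> (\<Union>k\<in>K. closure (V k))"
      using closure_subset by blast
    show "open (\<Union>k\<in>K. V k)"
      using that by (auto simp: lipschitz_domain_def)
  qed
  have "B - (region_union KS VS \<union> region_union KF VF) \<subseteq> interior_boundary B KF VF KS VS"
    using model(6) sub[OF model(4)] sub[OF model(5)] by blast
  also have "\<dots> \<subseteq> (\<Union>k\<in>KF. frontier (VF k)) \<union> (\<Union>k\<in>KS. frontier (VS k))"
    unfolding interior_boundary_def by blast
  finally have "B - (region_union KS VS \<union> region_union KF VF) \<subseteq>
      (\<Union>k\<in>KF. frontier (VF k)) \<union> (\<Union>k\<in>KS. frontier (VS k))" .
  moreover have "negligible ((\<Union>k\<in>KF. frontier (VF k)) \<union> (\<Union>k\<in>KS. frontier (VS k)))"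
    using model(2-5)
    by (intro negligible_Un negligible_Union) (auto intro: lipschitz_domain_frontier_negligible)
  ultimately show ?thesis
    by (rule negligible_subset[rotated])
qed

lemma admissibleE:
  assumes "admissible B KF VF KS VS I t0 \<phi>"
  obtains \<psi>S \<psi>F where "\<forall>x\<in>B. \<phi> t0 x = x"
    "reg_lip_pos (region_union KS VS) I t0 \<psi>S" "reg_lip_pos (region_union KF VF) I t0 \<psi>F"
    "\<And>t. t \<in> I \<Longrightarrow> glued_motion B (\<phi> t) (region_union KS VS) (\<psi>S t) (region_union KF VF) (\<psi>F t)"
proof -
  obtain \<psi>S \<psi>F where id: "\<forall>x\<in>B. \<phi> t0 x = x"
    and disj: "\<forall>t\<in>I. \<phi> t ` region_union KS VS \<inter> \<phi> t ` region_union KF VF = {}"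
    and reg: "reg_lip_pos (region_union KS VS) I t0 \<psi>S" "reg_lip_pos (region_union KF VF) I t0 \<psi>F"
    and agree: "\<forall>t\<in>I. \<forall>x\<in>region_union KS VS. \<phi> t x = \<psi>S t x"
      "\<forall>t\<in>I. \<forall>x\<in>region_union KF VF. \<phi> t x = \<psi>F t x"
    and rest: "\<forall>t\<in>I. \<forall>x\<in>closure B - (region_union KS VS \<union> region_union KF VF).
       (x \<in> closure (region_union KS VS) \<and> \<phi> t x = \<psi>S t x) \<or>
       (x \<in> closure (region_union KF VF) \<and> \<phi> t x = \<psi>F t x)"
    using assms unfolding admissible_def Let_def by - (elim conjE exE, rule that; assumption)
  show thesis
  proof (rule that[OF id reg])
    fix t assume "t \<in> I"
    then show "glued_motion B (\<phi> t) (region_union KS VS) (\<psi>S t) (region_union KF VF) (\<psi>F t)"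
      using disj agree rest closure_subset[of B] unfolding glued_motion_def by blast
  qed
qed

lemma mass_conserved_box_mass_balance:
  assumes mass: "mass_conserved V I t0 \<phi> \<rho>s" and V: "open V" and B: "open B"
    and id: "\<forall>x\<in>B. \<phi> t0 x = x"
  shows "AE t in lebesgue. t \<in> I \<longrightarrow> t0 \<in> I \<longrightarrow> box_mass_balance (V \<inter> B) (\<phi> t) (\<rho>s t) (\<rho>s t0)"
proof -
  define U where "U X = X \<inter> (V \<inter> B)" for X :: "(real^3) set"
  have "\<forall>X\<in>insert UNIV rat_boxes. \<exists>N. N \<in> null_sets lebesgue \<and> t0 \<notin> N \<and>
      (\<forall>t'\<in>I - N. \<forall>t''\<in>I - N.
        (LINT y:\<phi> t' ` U X|lebesgue. \<rho>s t' y) = (LINT y:\<phi> t'' ` U X|lebesgue. \<rho>s t'' y))"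
  proof
    fix X :: "(real^3) set" assume "X \<in> insert UNIV rat_boxes"
    then have "open (U X)" "U X \<subseteq> V"
      using V B by (auto simp: U_def rat_boxes_def)
    then show "\<exists>N. N \<in> null_sets lebesgue \<and> t0 \<notin> N \<and> (\<forall>t'\<in>I - N. \<forall>t''\<in>I - N.
        (LINT y:\<phi> t' ` U X|lebesgue. \<rho>s t' y) = (LINT y:\<phi> t'' ` U X|lebesgue. \<rho>s t'' y))"
      using mass unfolding mass_conserved_def by blast
  qed
  from bchoice[OF this] obtain N where N: "\<forall>X\<in>insert UNIV rat_boxes. N X \<in> null_sets lebesgue \<and> t0 \<notin> N X \<and>
      (\<forall>t'\<in>I - N X. \<forall>t''\<in>I - N X.
        (LINT y:\<phi> t' ` U X|lebesgue. \<rho>s t' y) = (LINT y:\<phi> t'' ` U X|lebesgue. \<rho>s t'' y))"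
    by blast
  have "(\<Union>X\<in>insert UNIV rat_boxes. N X) \<in> null_sets lebesgue"
    using N countable_rat_boxes by (intro null_sets_UN') auto
  moreover have "box_mass_balance (V \<inter> B) (\<phi> t) (\<rho>s t) (\<rho>s t0)"
    if t: "t \<in> I - (\<Union>X\<in>insert UNIV rat_boxes. N X)" and "t0 \<in> I" for t
  proof -
    have "(LINT y:\<phi> t ` U X|lebesgue. \<rho>s t y) = (LINT x:U X|lebesgue. \<rho>s t0 x)"
      if X: "X \<in> insert UNIV rat_boxes" for X
    proof -
      have "t \<in> I - N X" "t0 \<in> I - N X"
        using N X t \<open>t0 \<in> I\<close> by auto
      then have "(LINT y:\<phi> t ` U X|lebesgue. \<rho>s t y) = (LINT y:\<phi> t0 ` U X|lebesgue. \<rho>s t0 y)"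
        using N X by blast
      moreover have "\<phi> t0 ` U X = U X"
        using id by (force simp: U_def)
      ultimately show ?thesis
        by simp
    qed
    then show ?thesis
      unfolding box_mass_balance_def U_def by blast
  qed
  ultimately show ?thesis
    by (intro AE_I') auto
qed

lemma admissible_transport_at_time:
  fixes \<rho> \<rho>0 f :: "real^3 \<Rightarrow> real"
  assumes model: "composite_earth_model B KF VF KS VS" and adm: "admissible B KF VF KS VS I t0 \<phi>"
    and t: "t \<in> I" and A: "A \<subseteq> B" "A \<in> sets lebesgue"
    and \<rho>: "in_Linf (\<phi> t ` B) \<rho>" and \<rho>0: "in_Linf B \<rho>0" and f: "in_Linf B f"
    and mass_S: "box_mass_balance (region_union KS VS \<inter> B) (\<phi> t) \<rho> \<rho>0"
    and mass_F: "box_mass_balance (region_union KF VF \<inter> B) (\<phi> t) \<rho> \<rho>0"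
  shows "(LINT y:\<phi> t ` A|lebesgue. f (inv_into B (\<phi> t) y) * \<rho> y) = (LINT x:A|lebesgue. f x * \<rho>0 (\<phi> t0 x))"
proof -
  obtain \<psi>S \<psi>F where id: "\<forall>x\<in>B. \<phi> t0 x = x"
    and "reg_lip_pos (region_union KS VS) I t0 \<psi>S" "reg_lip_pos (region_union KF VF) I t0 \<psi>F"
    and glued: "glued_motion B (\<phi> t) (region_union KS VS) (\<psi>S t) (region_union KF VF) (\<psi>F t)"
    using adm by (rule admissibleE) (use t in blast)
  then have "regular_lipschitz_on (region_union KS VS) (\<psi>S t)"
    "regular_lipschitz_on (region_union KF VF) (\<psi>F t)"
    using t by (blast intro: reg_lip_pos_regular_lipschitz_on)+
  moreover have "open B" "bounded B"
    using composite_earth_modelD(1)[OF model] by (auto simp: lipschitz_domain_def)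
  ultimately have "(LINT y:\<phi> t ` A|lebesgue. f (inv_into B (\<phi> t) y) * \<rho> y) = (LINT x:A|lebesgue. f x * \<rho>0 x)"
    using glued_motion_transport[OF _ _ open_region_union open_region_union
        composite_earth_model_interface_negligible[OF model] A glued _ _ \<rho> \<rho>0 f mass_S mass_F]
    by blast
  also have "\<dots> = (LINT x:A|lebesgue. f x * \<rho>0 (\<phi> t0 x))"
    using id A by (intro set_lebesgue_integral_cong) auto
  finally show ?thesis .
qed

theorem mainTheorem4:
  fixes B :: "(real^3) set" and KF KS :: "nat set" and VF VS :: "nat \<Rightarrow> (real^3) set"
    and t0 t1 :: real and \<phi> :: "real \<Rightarrow> real^3 \<Rightarrow> real^3"
    and \<rho>s f :: "real \<Rightarrow> real^3 \<Rightarrow> real" and A :: "(real^3) set"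
  assumes "composite_earth_model B KF VF KS VS"
    and "admissible B KF VF KS VS {t0..t1} t0 \<phi>"
    and "\<exists>N. N \<in> null_sets lebesgue \<and> t0 \<notin> N \<and>
           (\<forall>t\<in>{t0..t1} - N. in_Linf (\<phi> t ` B) (\<rho>s t))"
    and "mass_conserved (region_union KS VS) {t0..t1} t0 \<phi> \<rho>s"
    and "mass_conserved (region_union KF VF) {t0..t1} t0 \<phi> \<rho>s"
    and "\<forall>t\<in>{t0..t1}. in_Linf B (f t)"
    and "lipschitz_domain A" and "A \<subseteq> B"
  shows "AE t in lebesgue. t \<in> {t0..t1} \<longrightarrow>
           (LINT y:\<phi> t ` A|lebesgue. f t (inv_into B (\<phi> t) y) * \<rho>s t y)
             = (LINT x:A|lebesgue. f t x * \<rho>s t0 (\<phi> t0 x))"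
proof -
  have id: "\<forall>x\<in>B. \<phi> t0 x = x"
    using assms(2) by (rule admissibleE)
  have "open B" and A: "A \<in> sets lebesgue"
    using composite_earth_modelD(1)[OF assms(1)] assms(7) by (auto simp: lipschitz_domain_def)
  obtain N0 where N0: "N0 \<in> null_sets lebesgue" "t0 \<notin> N0" "\<forall>t\<in>{t0..t1} - N0. in_Linf (\<phi> t ` B) (\<rho>s t)"
    using assms(3) by blast
  have "\<phi> t0 ` B = B"
    using id by force
  then have \<rho>0: "in_Linf B (\<rho>s t0)" if "t0 \<le> t1"
    using N0(2,3) that by (metis Diff_iff atLeastAtMost_iff order_refl)
  have "AE t in lebesgue. t \<in> {t0..t1} \<longrightarrow> in_Linf (\<phi> t ` B) (\<rho>s t)"
    using N0(3) by (intro AE_I'[OF N0(1)]) auto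
  moreover note mass_conserved_box_mass_balance[OF assms(4) open_region_union \<open>open B\<close> id]
    mass_conserved_box_mass_balance[OF assms(5) open_region_union \<open>open B\<close> id]
  ultimately show ?thesis
    by eventually_elim (use admissible_transport_at_time[OF assms(1,2) _ assms(8) A] assms(6) \<rho>0 in auto)
qed

end
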